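(* Let $E$ be a congruence on $\overline{\boldsymbol{T}(X_1,\ldots,X_n)}$, $F$ a congruence on $\overline{\boldsymbol{T}(Y_1,\ldots,Y_m)}$, $V:=\boldsymbol{V}(E)$, $W:=\boldsymbol{V}(F)$, $\pi_E$ the natural surjection onto $\overline{\boldsymbol{T}(X_1,\ldots,X_n)}/E$, and $\psi:\overline{\boldsymbol{T}(X_1,\ldots,X_n)}/E\to\overline{\boldsymbol{T}(Y_1,\ldots,Y_m)}/F$ a $\boldsymbol{T}$-algebra homomorphism; let $\theta:W\to\boldsymbol{T}^n$, $y\mapsto(\psi(\pi_E(X_1))(y),\ldots,\psi(\pi_E(X_n))(y))$. If $\psi$ is an isomorphism, then $V$ and $W$ are homeomorphic via $\theta$.
   Context: $\boldsymbol{T}=\mathbb{R}\cup\{-\infty\}$ with $a\oplus b=\max\{a,b\}$, $a\odot b=a+b$. $\overline{\boldsymbol{T}[X_1,\ldots,X_n]}$ is the tropical polynomial semiring modulo identifying polynomials defining the same function $\boldsymbol{T}^n\to\boldsymbol{T}$; it is cancellative and $\overline{\boldsymbol{T}(X_1,\ldots,X_n)}$ is its semifield of fractions ($X_i$ denoting the image of the variable). Each element defines a function $\mathbb{R}^n\to\boldsymbol{T}$ (quotients evaluated as differences). $\boldsymbol{T}$-algebras are semirings with a semiring homomorphism from $\boldsymbol{T}$; homomorphisms are compatible semiring homomorphisms, isomorphisms the bijective ones. A congruence is an equivalence relation compatible with both operations. $\boldsymbol{V}(E)=\{x\in\mathbb{R}^n\mid f(x)=g(x)\ \forall(f,g)\in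 E\}$; an element of the quotient by $F$ is evaluated at points of $\boldsymbol{V}(F)$ via any representative (well defined). Subsets of $\mathbb{R}^n$, $\mathbb{R}^m$ carry the Euclidean topology. *)

theory Defs
  imports "HOL-Analysis.Analysis"
begin

text \<open>The tropical semifield T = R \<union> {-\<infinity>} is modelled inside ereal (values never +\<infinity>).
 max is tropical addition, + is tropical multiplication.
 Elements of the semifield of fractions of the functional tropical polynomial semiring in the
 variables indexed by the finite type 'n are represented by the functions R^n \<rightarrow> T they define.\<close>

definition trop_poly_fun :: "((real^'n) \<Rightarrow> ereal) set" where
  "trop_poly_fun = {f. \<exists>S :: (('n \<Rightarrow> nat) \<times> real) set. finite S \<and>
      f = (\<lambda>x. (SUP p\<in>S. ereal (snd p + (\<Sum>i\<in>UNIV. real (fst p i) * x $ i))))}"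

definition trop_rat :: "((real^'n) \<Rightarrow> ereal) set" where
  "trop_rat = {(\<lambda>x. f x - g x) | f g. f \<in> trop_poly_fun \<and> g \<in> trop_poly_fun \<and> g \<noteq> (\<lambda>_. -\<infinity>)}"

definition tmax :: "((real^'n) \<Rightarrow> ereal) \<Rightarrow> ((real^'n) \<Rightarrow> ereal) \<Rightarrow> ((real^'n) \<Rightarrow> ereal)" where
  "tmax f g = (\<lambda>x. max (f x) (g x))"

definition tplus :: "((real^'n) \<Rightarrow> ereal) \<Rightarrow> ((real^'n) \<Rightarrow> ereal) \<Rightarrow> ((real^'n) \<Rightarrow> ereal)" where
  "tplus f g = (\<lambda>x. f x + g x)"

definition Xvar :: "'n \<Rightarrow> ((real^'n) \<Rightarrow> ereal)" where
  "Xvar i = (\<lambda>x. ereal (x $ i))"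

definition trop_congruence :: "(((real^'n) \<Rightarrow> ereal) \<times> ((real^'n) \<Rightarrow> ereal)) set \<Rightarrow> bool" where
  "trop_congruence E \<longleftrightarrow> equiv trop_rat E \<and>
     (\<forall>(a,b)\<in>E. \<forall>(c,d)\<in>E. (tmax a c, tmax b d) \<in> E \<and> (tplus a c, tplus b d) \<in> E)"

definition cls :: "(('a \<Rightarrow> ereal) \<times> ('a \<Rightarrow> ereal)) set \<Rightarrow> ('a \<Rightarrow> ereal) \<Rightarrow> ('a \<Rightarrow> ereal) set" where
  "cls E f = E `` {f}"

definition qop :: "(('a \<Rightarrow> ereal) \<Rightarrow> ('a \<Rightarrow> ereal) \<Rightarrow> ('a \<Rightarrow> ereal))
   \<Rightarrow> (('a \<Rightarrow> ereal) \<times> ('a \<Rightarrow> ereal)) set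
   \<Rightarrow> ('a \<Rightarrow> ereal) set \<Rightarrow> ('a \<Rightarrow> ereal) set \<Rightarrow> ('a \<Rightarrow> ereal) set" where
  "qop op E A B = E `` {op a b | a b. a \<in> A \<and> b \<in> B}"

text \<open>T-algebra homomorphism between quotients trop_rat // E and trop_rat // F:
 preserves tropical addition and multiplication and is compatible with the structure maps
 from T (c \<mapsto> class of the constant c), which also gives preservation of 0 and 1.\<close>
definition trop_alg_hom ::
  "(((real^'n) \<Rightarrow> ereal) \<times> ((real^'n) \<Rightarrow> ereal)) set \<Rightarrow> (((real^'m) \<Rightarrow> ereal) \<times> ((real^'m) \<Rightarrow> ereal)) set
   \<Rightarrow> (((real^'n) \<Rightarrow> ereal) set \<Rightarrow> ((real^'m) \<Rightarrow> ereal) set) \<Rightarrow> bool" where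
  "trop_alg_hom E F \<psi> \<longleftrightarrow>
     \<psi> ` (trop_rat // E) \<subseteq> trop_rat // F \<and>
     (\<forall>A\<in>trop_rat // E. \<forall>B\<in>trop_rat // E.
        \<psi> (qop tmax E A B) = qop tmax F (\<psi> A) (\<psi> B) \<and>
        \<psi> (qop tplus E A B) = qop tplus F (\<psi> A) (\<psi> B)) \<and>
     (\<forall>c::ereal. c \<noteq> \<infinity> \<longrightarrow> \<psi> (cls E (\<lambda>_. c)) = cls F (\<lambda>_. c))"

definition trop_alg_iso where
  "trop_alg_iso E F \<psi> \<longleftrightarrow> trop_alg_hom E F \<psi> \<and> bij_betw \<psi> (trop_rat // E) (trop_rat // F)"

definition Vset :: "(('a \<Rightarrow> ereal) \<times> ('a \<Rightarrow> ereal)) set \<Rightarrow> 'a set" where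
  "Vset E = {x. \<forall>(f,g)\<in>E. f x = g x}"

definition cls_eval :: "('a \<Rightarrow> ereal) set \<Rightarrow> 'a \<Rightarrow> ereal" where
  "cls_eval C y = (SOME f. f \<in> C) y"

end

theory Submission
  imports Defs
begin

text \<open>For a point y of W, the map f \<mapsto> \<psi>(\<pi> f)(y) respects max, + and the constants, and
  every such character of the semifield of tropical rational functions is evaluation at a point:
  at the point \<theta>(y) whose coordinates are its values on the variables. As the character respects
  every relation of E, \<theta>(y) lies in V. The coordinates of \<theta> are tropical rational functions,
  hence continuous. The same construction applied to \<psi>\<inverse> gives the inverse of \<theta>: the j-th
  coordinate of the composite at y is the value at y of \<psi>(\<psi>\<inverse>(\<pi> Y j)) = \<pi> Y j, which is y j.\<close>

section \<open>Tropical rational functions\<close>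

definition trop_monomial :: "('n \<Rightarrow> nat) \<times> real \<Rightarrow> real^'n \<Rightarrow> ereal" where
  "trop_monomial p x = ereal (snd p + (\<Sum>i\<in>UNIV. real (fst p i) * x $ i))"

lemma trop_poly_fun_iff:
  "f \<in> trop_poly_fun \<longleftrightarrow> (\<exists>S. finite S \<and> f = (\<lambda>x. SUP p\<in>S. trop_monomial p x))"
  unfolding trop_poly_fun_def trop_monomial_def by blast

lemma trop_poly_fun_SUP: "finite S \<Longrightarrow> (\<lambda>x. SUP p\<in>S. trop_monomial p x) \<in> trop_poly_fun"
  unfolding trop_poly_fun_iff by blast

lemma trop_monomial_in_trop_poly_fun: "trop_monomial p \<in> trop_poly_fun"
  using trop_poly_fun_SUP[of "{p}"] by simp

lemma const_in_trop_poly_fun: "(\<lambda>_. ereal c) \<in> trop_poly_fun"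
proof -
  have "(\<lambda>_. ereal c) = trop_monomial (\<lambda>_. 0, c)"
    by (simp add: trop_monomial_def fun_eq_iff)
  then show ?thesis using trop_monomial_in_trop_poly_fun by metis
qed

lemma Xvar_in_trop_poly_fun: "Xvar j \<in> trop_poly_fun"
proof -
  have "Xvar j = trop_monomial (\<lambda>i. if i = j then 1 else 0, 0)"
    by (simp add: trop_monomial_def Xvar_def fun_eq_iff if_distrib[where f = real]
        if_distrib[where f = "\<lambda>a. a * _"] cong: if_cong)
  then show ?thesis using trop_monomial_in_trop_poly_fun by metis
qed

lemma trop_monomial_Suc_exponent:
  fixes k :: "'n::finite \<Rightarrow> nat"
  shows "trop_monomial (k(j := Suc (k j)), c) = tplus (trop_monomial (k, c)) (Xvar j)"
proof -
  have "(\<Sum>i\<in>UNIV. real ((k(j := Suc (k j))) i) * x $ i)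
      = (\<Sum>i\<in>UNIV. real (k i) * x $ i + (if i = j then x $ i else 0))" for x :: "real^'n"
    by (intro sum.cong) (auto simp: algebra_simps)
  then show ?thesis
    by (simp add: trop_monomial_def tplus_def Xvar_def fun_eq_iff sum.distrib)
qed

lemma nat_fun_induct [case_names zero step]:
  fixes k :: "'n::finite \<Rightarrow> nat"
  assumes zero: "P (\<lambda>_. 0)" and step: "\<And>k j. P k \<Longrightarrow> P (k(j := Suc (k j)))"
  shows "P k"
proof (induction "sum k UNIV" arbitrary: k)
  case 0
  then show ?case using zero by (simp add: fun_eq_iff)
next
  case (Suc n)
  then obtain j where "k j > 0"
    by (metis gr0I sum.neutral nat.distinct(1))
  define k' where "k' = k(j := k j - 1)"
  have k: "k = k'(j := Suc (k' j))"
    using \<open>k j > 0\<close> by (simp add: k'_def fun_eq_iff)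
  have "sum k UNIV = Suc (sum k' UNIV)"
    by (subst k) (simp add: sum.remove[of UNIV j] k'_def)
  then have "P k'" using Suc by simp
  then show ?case using step k by metis
qed

lemma trop_poly_fun_real_valued:
  assumes "f \<in> trop_poly_fun" and "f \<noteq> (\<lambda>_. -\<infinity>)"
  obtains P where "continuous_on UNIV P" and "f = (\<lambda>x. ereal (P x))"
proof -
  obtain S where S: "finite S" "f = (\<lambda>x. SUP p\<in>S. trop_monomial p x)"
    using assms(1) trop_poly_fun_iff by blast
  have "S \<noteq> {}" using S assms(2) by (auto simp: bot_ereal_def)
  have "\<exists>P. continuous_on UNIV P \<and> (\<lambda>x. SUP p\<in>S. trop_monomial p x) = (\<lambda>x. ereal (P x))"
    using S(1) \<open>S \<noteq> {}\<close>
  proof (induction S rule: finite_ne_induct)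
    case (singleton p)
    have "continuous_on UNIV (\<lambda>x. snd p + (\<Sum>i\<in>UNIV. real (fst p i) * x $ i))"
      by (intro continuous_intros)
    then show ?case by (auto simp: trop_monomial_def)
  next
    case (insert p S)
    then obtain P where P: "continuous_on UNIV P" "(\<lambda>x. SUP q\<in>S. trop_monomial q x) = (\<lambda>x. ereal (P x))"
      by blast
    have "continuous_on UNIV (\<lambda>x. max (snd p + (\<Sum>i\<in>UNIV. real (fst p i) * x $ i)) (P x))"
      by (intro continuous_intros P(1))
    moreover have "(SUP q\<in>insert p S. trop_monomial q x)
        = ereal (max (snd p + (\<Sum>i\<in>UNIV. real (fst p i) * x $ i)) (P x))" for x
      using fun_cong[OF P(2), of x] by (simp add: sup_max trop_monomial_def)
    ultimately show ?case by blast
  qed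
  then show thesis using S that by blast
qed

lemma trop_ratI:
  "p \<in> trop_poly_fun \<Longrightarrow> q \<in> trop_poly_fun \<Longrightarrow> q \<noteq> (\<lambda>_. -\<infinity>) \<Longrightarrow>
    (\<lambda>x. p x - q x) \<in> trop_rat"
  unfolding trop_rat_def by blast

lemma trop_poly_fun_in_trop_rat:
  assumes "f \<in> trop_poly_fun"
  shows "f \<in> trop_rat"
proof -
  have "(\<lambda>x. f x - ereal 0) \<in> trop_rat"
    by (intro trop_ratI const_in_trop_poly_fun assms) (auto simp: fun_eq_iff)
  then show ?thesis by simp
qed

lemma trop_monomial_in_trop_rat: "trop_monomial p \<in> trop_rat"
  by (rule trop_poly_fun_in_trop_rat[OF trop_monomial_in_trop_poly_fun])

lemma Xvar_in_trop_rat: "Xvar j \<in> trop_rat"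
  by (rule trop_poly_fun_in_trop_rat[OF Xvar_in_trop_poly_fun])

lemma uminus_in_trop_rat:
  "q \<in> trop_poly_fun \<Longrightarrow> q \<noteq> (\<lambda>_. -\<infinity>) \<Longrightarrow> (\<lambda>x. - q x) \<in> trop_rat"
  using trop_ratI[OF const_in_trop_poly_fun[of 0]] by (simp flip: zero_ereal_def)

lemma const_in_trop_rat:
  assumes "c \<noteq> \<infinity>"
  shows "(\<lambda>_. c) \<in> trop_rat"
proof (cases c)
  case (real r)
  then show ?thesis using trop_poly_fun_in_trop_rat[OF const_in_trop_poly_fun] by simp
next
  case MInf
  have "(\<lambda>x. SUP p\<in>{}. trop_monomial p x) \<in> trop_rat"
    by (intro trop_poly_fun_in_trop_rat trop_poly_fun_SUP) simp
  then show ?thesis using MInf by (simp add: bot_ereal_def)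
qed (use assms in simp)

lemma continuous_on_trop_rat:
  assumes "f \<in> trop_rat"
  shows "continuous_on A (\<lambda>x. real_of_ereal (f x))"
proof -
  obtain p q where pq: "f = (\<lambda>x. p x - q x)" "p \<in> trop_poly_fun" "q \<in> trop_poly_fun"
    "q \<noteq> (\<lambda>_. -\<infinity>)"
    using assms unfolding trop_rat_def by blast
  obtain Q where Q: "continuous_on UNIV Q" "q = (\<lambda>x. ereal (Q x))"
    using trop_poly_fun_real_valued[OF pq(3,4)] .
  show ?thesis
  proof (cases "p = (\<lambda>_. -\<infinity>)")
    case True
    then show ?thesis by (simp add: pq(1) Q(2))
  next
    case False
    then obtain P where P: "continuous_on UNIV P" "p = (\<lambda>x. ereal (P x))"
      using trop_poly_fun_real_valued[OF pq(2)] by blast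
    have "continuous_on A (\<lambda>x. P x - Q x)"
      using P(1) Q(1) by (intro continuous_intros) (auto intro: continuous_on_subset)
    then show ?thesis by (simp add: pq(1) P(2) Q(2))
  qed
qed

section \<open>Characters of the semifield of tropical rational functions\<close>

definition trop_character :: "((real^'n \<Rightarrow> ereal) \<Rightarrow> ereal) \<Rightarrow> bool" where
  "trop_character ev \<longleftrightarrow>
     (\<forall>a\<in>trop_rat. \<forall>b\<in>trop_rat.
        ev (tmax a b) = max (ev a) (ev b) \<and> ev (tplus a b) = ev a + ev b) \<and>
     (\<forall>c. c \<noteq> \<infinity> \<longrightarrow> ev (\<lambda>_. c) = c)"

definition character_point :: "((real^'n \<Rightarrow> ereal) \<Rightarrow> ereal) \<Rightarrow> real^'n" where
  "character_point ev = (\<chi> i. real_of_ereal (ev (Xvar i)))"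

context
  fixes ev :: "(real^'n \<Rightarrow> ereal) \<Rightarrow> ereal"
  assumes ev: "trop_character ev"
begin

lemma character_tmax: "a \<in> trop_rat \<Longrightarrow> b \<in> trop_rat \<Longrightarrow> ev (tmax a b) = max (ev a) (ev b)"
  using ev unfolding trop_character_def by blast

lemma character_tplus: "a \<in> trop_rat \<Longrightarrow> b \<in> trop_rat \<Longrightarrow> ev (tplus a b) = ev a + ev b"
  using ev unfolding trop_character_def by blast

lemma character_const: "c \<noteq> \<infinity> \<Longrightarrow> ev (\<lambda>_. c) = c"
  using ev unfolding trop_character_def by blast

lemma character_uminus:
  assumes "q \<in> trop_poly_fun" and "q = (\<lambda>x. ereal (Q x))"
  shows "ev q \<in> range ereal" and "ev (\<lambda>x. - q x) = - ev q"
proof -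
  have "q \<noteq> (\<lambda>_. -\<infinity>)" using assms(2) by (auto simp: fun_eq_iff)
  then have "(\<lambda>x. - q x) \<in> trop_rat" "q \<in> trop_rat"
    using assms(1) uminus_in_trop_rat trop_poly_fun_in_trop_rat by auto
  moreover have "tplus q (\<lambda>x. - q x) = (\<lambda>_. 0)"
    by (simp add: assms(2) tplus_def fun_eq_iff zero_ereal_def)
  ultimately have "ev q + ev (\<lambda>x. - q x) = ev (\<lambda>_. 0)"
    by (simp flip: character_tplus)
  then have "ev q + ev (\<lambda>x. - q x) = 0" by (simp add: character_const)
  then show "ev q \<in> range ereal" "ev (\<lambda>x. - q x) = - ev q"
    by (cases "ev q"; cases "ev (\<lambda>x. - q x)"; simp)+
qed

lemma character_Xvar: "ev (Xvar i) = ereal (character_point ev $ i)"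
proof -
  obtain r where "ev (Xvar i) = ereal r"
    using character_uminus(1)[OF Xvar_in_trop_poly_fun Xvar_def] by blast
  then show ?thesis by (simp add: character_point_def)
qed

lemma character_trop_monomial: "ev (trop_monomial p) = trop_monomial p (character_point ev)"
proof -
  have "ev (trop_monomial (k, 0)) = trop_monomial (k, 0) (character_point ev)" for k
  proof (induction k rule: nat_fun_induct)
    case zero
    have "trop_monomial ((\<lambda>_. 0), 0) = (\<lambda>_::real^'n. 0)"
      by (simp add: trop_monomial_def fun_eq_iff zero_ereal_def)
    then show ?case using character_const[of 0] by simp
  next
    case (step k j)
    have "ev (trop_monomial (k(j := Suc (k j)), 0)) = ev (trop_monomial (k, 0)) + ev (Xvar j)"
      by (simp only: trop_monomial_Suc_exponent character_tplus trop_monomial_in_trop_rat Xvar_in_trop_rat)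
    also have "\<dots> = trop_monomial (k(j := Suc (k j)), 0) (character_point ev)"
      unfolding trop_monomial_Suc_exponent tplus_def step character_Xvar by (simp add: Xvar_def)
    finally show ?case .
  qed
  note monomial = this
  have "trop_monomial p = tplus (\<lambda>_. ereal (snd p)) (trop_monomial (fst p, 0))"
    by (simp add: trop_monomial_def tplus_def fun_eq_iff)
  then have "ev (trop_monomial p) = ev (\<lambda>_. ereal (snd p)) + ev (trop_monomial (fst p, 0))"
    by (simp add: character_tplus const_in_trop_rat trop_monomial_in_trop_rat)
  also have "\<dots> = trop_monomial p (character_point ev)"
    by (simp only: monomial) (simp add: character_const trop_monomial_def)
  finally show ?thesis .
qed

lemma character_trop_poly_fun: "f \<in> trop_poly_fun \<Longrightarrow> ev f = f (character_point ev)"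
proof -
  have "ev (\<lambda>x. SUP p\<in>S. trop_monomial p x) = (SUP p\<in>S. trop_monomial p (character_point ev))"
    if "finite S" for S
    using that
  proof (induction S rule: finite_induct)
    case empty
    then show ?case using character_const[of "-\<infinity>"] by (simp add: bot_ereal_def)
  next
    case (insert p S)
    have "(\<lambda>x. SUP q\<in>insert p S. trop_monomial q x)
        = tmax (trop_monomial p) (\<lambda>x. SUP q\<in>S. trop_monomial q x)"
      by (simp add: tmax_def sup_max fun_eq_iff)
    moreover have "(\<lambda>x. SUP q\<in>S. trop_monomial q x) \<in> trop_rat"
      using insert(1) trop_poly_fun_SUP trop_poly_fun_in_trop_rat by blast
    ultimately show ?case
      using insert(3)
      by (simp add: character_tmax character_trop_monomial trop_monomial_in_trop_rat sup_max)
  qed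
  then show "f \<in> trop_poly_fun \<Longrightarrow> ev f = f (character_point ev)"
    unfolding trop_poly_fun_iff by blast
qed

theorem character_eq_eval: "f \<in> trop_rat \<Longrightarrow> ev f = f (character_point ev)"
proof -
  assume "f \<in> trop_rat"
  then obtain p q where pq: "f = (\<lambda>x. p x - q x)" "p \<in> trop_poly_fun" "q \<in> trop_poly_fun"
    "q \<noteq> (\<lambda>_. -\<infinity>)"
    unfolding trop_rat_def by blast
  obtain Q where Q: "q = (\<lambda>x. ereal (Q x))"
    using trop_poly_fun_real_valued[OF pq(3,4)] by blast
  have "f = tplus p (\<lambda>x. - q x)" by (simp add: pq(1) tplus_def minus_ereal_def)
  then have "ev f = ev p + ev (\<lambda>x. - q x)"
    using character_tplus pq uminus_in_trop_rat trop_poly_fun_in_trop_rat by auto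
  also have "\<dots> = p (character_point ev) - q (character_point ev)"
    using character_uminus(2)[OF pq(3) Q] character_trop_poly_fun pq(2,3)
    by (simp add: minus_ereal_def)
  finally show ?thesis by (simp add: pq(1))
qed

end

section \<open>Quotients by congruences\<close>

context
  fixes E :: "((real^'n \<Rightarrow> ereal) \<times> (real^'n \<Rightarrow> ereal)) set"
  assumes E: "trop_congruence E"
begin

lemma congruence_equiv: "equiv trop_rat E"
  using E unfolding trop_congruence_def by blast

lemma congruence_refl: "a \<in> trop_rat \<Longrightarrow> (a, a) \<in> E"
  using congruence_equiv by (simp add: equiv_def refl_on_def)

lemma congruence_tmax: "(a, b) \<in> E \<Longrightarrow> (c, d) \<in> E \<Longrightarrow> (tmax a c, tmax b d) \<in> E"
  using E unfolding trop_congruence_def by blast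

lemma congruence_tplus: "(a, b) \<in> E \<Longrightarrow> (c, d) \<in> E \<Longrightarrow> (tplus a c, tplus b d) \<in> E"
  using E unfolding trop_congruence_def by blast

lemma congruence_subset: "E \<subseteq> trop_rat \<times> trop_rat"
  using congruence_equiv by (simp add: equiv_def refl_on_def)

text \<open>Closure of trop_rat under the operations, read off from the congruence, which relates
  only tropical rational functions.\<close>
lemma tmax_in_trop_rat:
  fixes a b :: "real^'n \<Rightarrow> ereal"
  shows "a \<in> trop_rat \<Longrightarrow> b \<in> trop_rat \<Longrightarrow> tmax a b \<in> trop_rat"
  using congruence_tmax[OF congruence_refl congruence_refl, of a b] congruence_subset by blast

lemma tplus_in_trop_rat:
  fixes a b :: "real^'n \<Rightarrow> ereal"
  shows "a \<in> trop_rat \<Longrightarrow> b \<in> trop_rat \<Longrightarrow> tplus a b \<in> trop_rat"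
  using congruence_tplus[OF congruence_refl congruence_refl, of a b] congruence_subset by blast

lemma qop_cls:
  assumes "a \<in> trop_rat" "b \<in> trop_rat"
    and op: "\<And>a b c d. (a, b) \<in> E \<Longrightarrow> (c, d) \<in> E \<Longrightarrow> (op a c, op b d) \<in> E"
  shows "qop op E (cls E a) (cls E b) = cls E (op a b)"
proof -
  let ?M = "{op a' b' | a' b'. a' \<in> cls E a \<and> b' \<in> cls E b}"
  have "op a b \<in> ?M" using assms congruence_refl unfolding cls_def by blast
  moreover have "(op a b, m) \<in> E" if "m \<in> ?M" for m
    using that op unfolding cls_def by blast
  ultimately have "E `` ?M = E `` {op a b}"
    using congruence_equiv unfolding equiv_def trans_def by blast
  then show ?thesis unfolding qop_def cls_def .
qed

lemma cls_in_quotient: "a \<in> trop_rat \<Longrightarrow> cls E a \<in> trop_rat // E"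
  unfolding cls_def by (rule quotientI)

lemma quotient_obtain_cls:
  assumes "C \<in> trop_rat // E"
  obtains a where "a \<in> trop_rat" and "C = cls E a"
  using assms unfolding cls_def by (rule quotientE)

lemma qop_in_quotient:
  assumes "A \<in> trop_rat // E" "B \<in> trop_rat // E"
  shows "qop tmax E A B \<in> trop_rat // E" and "qop tplus E A B \<in> trop_rat // E"
proof -
  obtain a b where "a \<in> trop_rat" "A = cls E a" "b \<in> trop_rat" "B = cls E b"
    using assms quotient_obtain_cls by metis
  then show "qop tmax E A B \<in> trop_rat // E" "qop tplus E A B \<in> trop_rat // E"
    using qop_cls congruence_tmax congruence_tplus cls_in_quotient tmax_in_trop_rat tplus_in_trop_rat
    by metis+
qed

lemma cls_eval_cls: "x \<in> Vset E \<Longrightarrow> a \<in> trop_rat \<Longrightarrow> cls_eval (cls E a) x = a x"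
  using someI[of "\<lambda>f. f \<in> cls E a" a] congruence_refl
  unfolding cls_eval_def cls_def Vset_def by fastforce

lemma cls_eval_in_trop_rat: "C \<in> trop_rat // E \<Longrightarrow> cls_eval C \<in> trop_rat"
  using someI[of "\<lambda>f. f \<in> C"] in_quotient_imp_subset[OF congruence_equiv]
  unfolding cls_eval_def
  by (metis congruence_refl quotient_obtain_cls cls_def Image_singleton_iff subset_iff)

end

section \<open>The map induced by a homomorphism of coordinate algebras\<close>

definition induced_map ::
  "((real^'n \<Rightarrow> ereal) \<times> (real^'n \<Rightarrow> ereal)) set
   \<Rightarrow> ((real^'n \<Rightarrow> ereal) set \<Rightarrow> (real^'m \<Rightarrow> ereal) set) \<Rightarrow> real^'m \<Rightarrow> real^'n" where
  "induced_map E \<psi> y = character_point (\<lambda>f. cls_eval (\<psi> (cls E f)) y)"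

context
  fixes E :: "((real^'n \<Rightarrow> ereal) \<times> (real^'n \<Rightarrow> ereal)) set"
    and F :: "((real^'m \<Rightarrow> ereal) \<times> (real^'m \<Rightarrow> ereal)) set"
    and \<psi> :: "(real^'n \<Rightarrow> ereal) set \<Rightarrow> (real^'m \<Rightarrow> ereal) set"
  assumes E: "trop_congruence E" and F: "trop_congruence F" and hom: "trop_alg_hom E F \<psi>"
begin

lemma hom_cls_obtain:
  assumes "a \<in> trop_rat"
  obtains r where "r \<in> trop_rat" and "\<psi> (cls E a) = cls F r"
  using hom cls_in_quotient[OF E assms] quotient_obtain_cls[OF F] unfolding trop_alg_hom_def
  by blast

lemma hom_cls_tmax:
  assumes "a \<in> trop_rat" "b \<in> trop_rat"
  shows "\<psi> (cls E (tmax a b)) = qop tmax F (\<psi> (cls E a)) (\<psi> (cls E b))"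
proof -
  have "\<psi> (qop tmax E (cls E a) (cls E b)) = qop tmax F (\<psi> (cls E a)) (\<psi> (cls E b))"
    using hom cls_in_quotient[OF E assms(1)] cls_in_quotient[OF E assms(2)]
    unfolding trop_alg_hom_def by blast
  then show ?thesis using qop_cls[OF E assms congruence_tmax[OF E]] by simp
qed

lemma hom_cls_tplus:
  assumes "a \<in> trop_rat" "b \<in> trop_rat"
  shows "\<psi> (cls E (tplus a b)) = qop tplus F (\<psi> (cls E a)) (\<psi> (cls E b))"
proof -
  have "\<psi> (qop tplus E (cls E a) (cls E b)) = qop tplus F (\<psi> (cls E a)) (\<psi> (cls E b))"
    using hom cls_in_quotient[OF E assms(1)] cls_in_quotient[OF E assms(2)]
    unfolding trop_alg_hom_def by blast
  then show ?thesis using qop_cls[OF E assms congruence_tplus[OF E]] by simp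
qed

lemma hom_character:
  assumes y: "y \<in> Vset F"
  shows "trop_character (\<lambda>f. cls_eval (\<psi> (cls E f)) y)"
  unfolding trop_character_def
proof (intro conjI ballI allI impI)
  fix a b :: "real^'n \<Rightarrow> ereal"
  assume ab: "a \<in> trop_rat" "b \<in> trop_rat"
  then obtain ra rb where r: "ra \<in> trop_rat" "\<psi> (cls E a) = cls F ra"
    "rb \<in> trop_rat" "\<psi> (cls E b) = cls F rb"
    using hom_cls_obtain by metis
  have "cls_eval (\<psi> (cls E (tmax a b))) y = tmax ra rb y"
    using hom_cls_tmax[OF ab] r qop_cls[OF F r(1,3) congruence_tmax[OF F]]
      cls_eval_cls[OF F y tmax_in_trop_rat[OF F r(1,3)]] by simp
  then show "cls_eval (\<psi> (cls E (tmax a b))) y = max (cls_eval (\<psi> (cls E a)) y) (cls_eval (\<psi> (cls E b)) y)"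
    using r cls_eval_cls[OF F y] by (simp add: tmax_def)
  have "cls_eval (\<psi> (cls E (tplus a b))) y = tplus ra rb y"
    using hom_cls_tplus[OF ab] r qop_cls[OF F r(1,3) congruence_tplus[OF F]]
      cls_eval_cls[OF F y tplus_in_trop_rat[OF F r(1,3)]] by simp
  then show "cls_eval (\<psi> (cls E (tplus a b))) y = cls_eval (\<psi> (cls E a)) y + cls_eval (\<psi> (cls E b)) y"
    using r cls_eval_cls[OF F y] by (simp add: tplus_def)
next
  fix c :: ereal assume "c \<noteq> \<infinity>"
  then show "cls_eval (\<psi> (cls E (\<lambda>_. c))) y = c"
    using hom const_in_trop_rat cls_eval_cls[OF F y] unfolding trop_alg_hom_def by auto
qed

lemma induced_map_eval:
  assumes "y \<in> Vset F" and "f \<in> trop_rat"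
  shows "cls_eval (\<psi> (cls E f)) y = f (induced_map E \<psi> y)"
  using character_eq_eval[OF hom_character[OF assms(1)] assms(2)] unfolding induced_map_def .

lemma hom_Xvar_finite: "y \<in> Vset F \<Longrightarrow> cls_eval (\<psi> (cls E (Xvar i))) y \<in> range ereal"
  using induced_map_eval[OF _ Xvar_in_trop_rat] by (simp add: Xvar_def)

lemma induced_map_in_Vset:
  assumes "y \<in> Vset F"
  shows "induced_map E \<psi> y \<in> Vset E"
  unfolding Vset_def
proof (intro CollectI ballI, clarify)
  fix f g assume fg: "(f, g) \<in> E"
  then have "f \<in> trop_rat" "g \<in> trop_rat" using congruence_subset[OF E] by auto
  moreover have "cls E f = cls E g"
    unfolding cls_def using equiv_class_eq[OF congruence_equiv[OF E] fg] .
  ultimately show "f (induced_map E \<psi> y) = g (induced_map E \<psi> y)"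
    using induced_map_eval[OF assms] by metis
qed

lemma continuous_on_induced_map: "continuous_on A (induced_map E \<psi>)"
proof -
  have "cls_eval (\<psi> (cls E (Xvar i))) \<in> trop_rat" for i
    using hom cls_in_quotient[OF E Xvar_in_trop_rat] cls_eval_in_trop_rat[OF F]
    unfolding trop_alg_hom_def by blast
  then have "continuous_on A (\<lambda>y. induced_map E \<psi> y $ i)" for i
    by (simp add: induced_map_def character_point_def continuous_on_trop_rat)
  then show ?thesis
    using continuous_on_vec_lambda[of A "\<lambda>i y. induced_map E \<psi> y $ i"] by simp
qed

end

lemma trop_alg_iso_inv_hom:
  assumes E: "trop_congruence E" and F: "trop_congruence F" and iso: "trop_alg_iso E F \<psi>"
  shows "trop_alg_hom F E (inv_into (trop_rat // E) \<psi>)"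
proof -
  let ?\<phi> = "inv_into (trop_rat // E) \<psi>"
  have hom: "trop_alg_hom E F \<psi>" and bij: "bij_betw \<psi> (trop_rat // E) (trop_rat // F)"
    using iso unfolding trop_alg_iso_def by auto
  have \<phi>_in: "?\<phi> A \<in> trop_rat // E" if "A \<in> trop_rat // F" for A
    using bij_betw_apply[OF bij_betw_inv_into[OF bij] that] .
  have \<psi>_\<phi>: "\<psi> (?\<phi> A) = A" if "A \<in> trop_rat // F" for A
    using bij_betw_inv_into_right[OF bij that] .
  have \<phi>_\<psi>: "?\<phi> (\<psi> A) = A" if "A \<in> trop_rat // E" for A
    using that bij bij_betw_inv_into_left by metis
  have "?\<phi> (qop tmax F A B) = qop tmax E (?\<phi> A) (?\<phi> B)"
    and "?\<phi> (qop tplus F A B) = qop tplus E (?\<phi> A) (?\<phi> B)"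
    if "A \<in> trop_rat // F" "B \<in> trop_rat // F" for A B
    using hom \<phi>_in[OF that(1)] \<phi>_in[OF that(2)] \<psi>_\<phi>[OF that(1)] \<psi>_\<phi>[OF that(2)]
      \<phi>_\<psi>[OF qop_in_quotient(1)[OF E]] \<phi>_\<psi>[OF qop_in_quotient(2)[OF E]]
    unfolding trop_alg_hom_def by metis+
  moreover have "?\<phi> (cls F (\<lambda>_. c)) = cls E (\<lambda>_. c)" if "c \<noteq> \<infinity>" for c
    using hom \<phi>_\<psi>[OF cls_in_quotient[OF E const_in_trop_rat[OF that]]] that
    unfolding trop_alg_hom_def by metis
  ultimately show ?thesis
    unfolding trop_alg_hom_def using \<phi>_in by blast
qed

lemma induced_map_inverse:
  assumes E: "trop_congruence E" and F: "trop_congruence F"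
    and \<psi>: "trop_alg_hom E F \<psi>" and \<phi>: "trop_alg_hom F E \<phi>"
    and \<psi>_\<phi>: "\<And>A. A \<in> trop_rat // F \<Longrightarrow> \<psi> (\<phi> A) = A"
    and y: "y \<in> Vset F"
  shows "induced_map F \<phi> (induced_map E \<psi> y) = y"
proof -
  let ?x = "induced_map E \<psi> y"
  have x: "?x \<in> Vset E" by (rule induced_map_in_Vset[OF E F \<psi> y])
  have "induced_map F \<phi> ?x $ j = y $ j" for j
  proof -
    obtain a where a: "a \<in> trop_rat" "\<phi> (cls F (Xvar j)) = cls E a"
      using hom_cls_obtain[OF F E \<phi> Xvar_in_trop_rat] .
    have "ereal (induced_map F \<phi> ?x $ j) = cls_eval (\<phi> (cls F (Xvar j))) ?x"
      using induced_map_eval[OF F E \<phi> x Xvar_in_trop_rat] by (simp add: Xvar_def)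
    also have "\<dots> = a ?x"
      using cls_eval_cls[OF E x a(1)] a(2) by simp
    also have "\<dots> = cls_eval (\<psi> (\<phi> (cls F (Xvar j)))) y"
      using induced_map_eval[OF E F \<psi> y a(1)] a(2) by simp
    also have "\<dots> = cls_eval (cls F (Xvar j)) y"
      using \<psi>_\<phi>[OF cls_in_quotient[OF F Xvar_in_trop_rat]] by simp
    also have "\<dots> = ereal (y $ j)"
      using cls_eval_cls[OF F y Xvar_in_trop_rat] by (simp add: Xvar_def)
    finally show ?thesis by simp
  qed
  then show ?thesis by (simp add: vec_eq_iff)
qed

theorem corollary3p20:
  fixes E :: "(((real^'n) \<Rightarrow> ereal) \<times> ((real^'n) \<Rightarrow> ereal)) set"
    and F :: "(((real^'m) \<Rightarrow> ereal) \<times> ((real^'m) \<Rightarrow> ereal)) set"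
    and \<psi> :: "((real^'n) \<Rightarrow> ereal) set \<Rightarrow> ((real^'m) \<Rightarrow> ereal) set"
  assumes "trop_congruence E" and "trop_congruence F"
    and "trop_alg_iso E F \<psi>"
  shows "(\<forall>y\<in>Vset F. \<forall>i. cls_eval (\<psi> (cls E (Xvar i))) y \<in> range ereal) \<and>
         (\<exists>g. homeomorphism (Vset F) (Vset E)
                (\<lambda>y. \<chi> i. real_of_ereal (cls_eval (\<psi> (cls E (Xvar i))) y)) g)"
proof -
  note E = assms(1) and F = assms(2)
  let ?\<phi> = "inv_into (trop_rat // E) \<psi>"
  have \<psi>: "trop_alg_hom E F \<psi>" and bij: "bij_betw \<psi> (trop_rat // E) (trop_rat // F)"
    using assms(3) unfolding trop_alg_iso_def by auto
  have \<phi>: "trop_alg_hom F E ?\<phi>" by (rule trop_alg_iso_inv_hom[OF assms])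
  have "homeomorphism (Vset F) (Vset E) (induced_map E \<psi>) (induced_map F ?\<phi>)"
  proof (rule homeomorphismI)
    show "continuous_on (Vset F) (induced_map E \<psi>)" "continuous_on (Vset E) (induced_map F ?\<phi>)"
      using continuous_on_induced_map E F \<psi> \<phi> by blast+
    show "induced_map E \<psi> ` Vset F \<subseteq> Vset E" "induced_map F ?\<phi> ` Vset E \<subseteq> Vset F"
      using induced_map_in_Vset E F \<psi> \<phi> by blast+
    show "induced_map F ?\<phi> (induced_map E \<psi> y) = y" if "y \<in> Vset F" for y
      using induced_map_inverse[OF E F \<psi> \<phi> _ that] bij bij_betw_inv_into_right by metis
    show "induced_map E \<psi> (induced_map F ?\<phi> x) = x" if "x \<in> Vset E" for x
      using induced_map_inverse[OF F E \<phi> \<psi> _ that] bij bij_betw_inv_into_left by metis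
  qed
  moreover have "induced_map E \<psi> = (\<lambda>y. \<chi> i. real_of_ereal (cls_eval (\<psi> (cls E (Xvar i))) y))"
    by (simp add: induced_map_def character_point_def fun_eq_iff)
  ultimately show ?thesis
    using hom_Xvar_finite[OF E F \<psi>] by auto
qed

end
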